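(* Let $(A,\star_A,\omega)$ be a quadratic perm algebra and let $P:A\to A$ be either an averaging operator or a derivation of $(A,\star_A)$. Define $x\circ_A y=P(x)\star_A y-x\star_A P(y)$ for all $x,y\in A$. Then $(A,\circ_A)$ is a Leibniz algebra, and $\omega$ is a nondegenerate skew-symmetric $2$-cocycle on $(A,\circ_A)$.
   Context: All vector spaces are finite-dimensional over a field $\mathbb K$ of characteristic zero. A perm algebra is a vector space $A$ with a multiplication $\star_A$ such that $x\star_A(y\star_A z)=(x\star_A y)\star_A z=(y\star_A x)\star_A z$ for all $x,y,z$. A quadratic perm algebra $(A,\star_A,\omega)$ is a perm algebra with a nondegenerate skew-symmetric bilinear form $\omega$ such that $\omega(x\star_A y,z)=\omega(x,y\star_A z-z\star_A y)$ for all $x,y,z$. A linear map $P:A\to A$ is an averaging operator of $(A,\star_A)$ if $P(x)\star_A P(y)=P(P(x)\star_A y)=P(x\star_A P(y))$ for all $x,y$, and a derivation if $P(x\star_A y)=P(x)\star_A y+x\star_A P(y)$ for all $x,y$. A Leibniz algebra is a vector space $A$ with a multiplication $\circ_A$ satisfying $x\circ_A(y\circ_A z)=(x\circ_A y)\circ_A z+y\circ_A(x\circ_A z)$. A bilinear form $\omega$ on a Leibniz algebra $(A,\circ_A)$ is a $2$-cocycle if $\omega(z,x\circ_A y)=\omega(x,y\circ_A z+z\circ_A y)-\omega(y,x\circ_A z)$ for all $x,y,z\in A$. *)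

theory Defs
  imports Main "HOL.Vector_Spaces"
begin

definition fin_dim_vs :: "('k::field_char_0 \<Rightarrow> 'v::ab_group_add \<Rightarrow> 'v) \<Rightarrow> bool" where
  "fin_dim_vs sc \<longleftrightarrow> (\<exists>B. finite_dimensional_vector_space sc B)"

definition bilinear_op :: "('k::field \<Rightarrow> 'v::ab_group_add \<Rightarrow> 'v) \<Rightarrow> ('v \<Rightarrow> 'v \<Rightarrow> 'v) \<Rightarrow> bool" where
  "bilinear_op sc m \<longleftrightarrow> (\<forall>x. Vector_Spaces.linear sc sc (m x)) \<and> (\<forall>y. Vector_Spaces.linear sc sc (\<lambda>x. m x y))"

definition bilinear_form :: "('k::field \<Rightarrow> 'v::ab_group_add \<Rightarrow> 'v) \<Rightarrow> ('v \<Rightarrow> 'v \<Rightarrow> 'k) \<Rightarrow> bool" where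
  "bilinear_form sc w \<longleftrightarrow> (\<forall>x. Vector_Spaces.linear sc (*) (w x)) \<and> (\<forall>y. Vector_Spaces.linear sc (*) (\<lambda>x. w x y))"

definition nondegenerate :: "('v::ab_group_add \<Rightarrow> 'v \<Rightarrow> 'k::field) \<Rightarrow> bool" where
  "nondegenerate w \<longleftrightarrow> (\<forall>x. (\<forall>y. w x y = 0) \<longrightarrow> x = 0) \<and> (\<forall>y. (\<forall>x. w x y = 0) \<longrightarrow> y = 0)"

definition skew_symmetric :: "('v \<Rightarrow> 'v \<Rightarrow> 'k::field) \<Rightarrow> bool" where
  "skew_symmetric w \<longleftrightarrow> (\<forall>x y. w x y = - w y x)"

definition perm_algebra :: "('k::field \<Rightarrow> 'v::ab_group_add \<Rightarrow> 'v) \<Rightarrow> ('v \<Rightarrow> 'v \<Rightarrow> 'v) \<Rightarrow> bool" where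
  "perm_algebra sc m \<longleftrightarrow> bilinear_op sc m \<and>
     (\<forall>x y z. m x (m y z) = m (m x y) z \<and> m (m x y) z = m (m y x) z)"

definition quadratic_perm_algebra ::
  "('k::field \<Rightarrow> 'v::ab_group_add \<Rightarrow> 'v) \<Rightarrow> ('v \<Rightarrow> 'v \<Rightarrow> 'v) \<Rightarrow> ('v \<Rightarrow> 'v \<Rightarrow> 'k) \<Rightarrow> bool" where
  "quadratic_perm_algebra sc m w \<longleftrightarrow> perm_algebra sc m \<and> bilinear_form sc w \<and>
     nondegenerate w \<and> skew_symmetric w \<and>
     (\<forall>x y z. w (m x y) z = w x (m y z - m z y))"

definition averaging_operator ::
  "('k::field \<Rightarrow> 'v::ab_group_add \<Rightarrow> 'v) \<Rightarrow> ('v \<Rightarrow> 'v \<Rightarrow> 'v) \<Rightarrow> ('v \<Rightarrow> 'v) \<Rightarrow> bool" where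
  "averaging_operator sc m P \<longleftrightarrow> Vector_Spaces.linear sc sc P \<and>
     (\<forall>x y. m (P x) (P y) = P (m (P x) y) \<and> P (m (P x) y) = P (m x (P y)))"

definition derivation ::
  "('k::field \<Rightarrow> 'v::ab_group_add \<Rightarrow> 'v) \<Rightarrow> ('v \<Rightarrow> 'v \<Rightarrow> 'v) \<Rightarrow> ('v \<Rightarrow> 'v) \<Rightarrow> bool" where
  "derivation sc m P \<longleftrightarrow> Vector_Spaces.linear sc sc P \<and> (\<forall>x y. P (m x y) = m (P x) y + m x (P y))"

definition leibniz_algebra :: "('k::field \<Rightarrow> 'v::ab_group_add \<Rightarrow> 'v) \<Rightarrow> ('v \<Rightarrow> 'v \<Rightarrow> 'v) \<Rightarrow> bool" where
  "leibniz_algebra sc m \<longleftrightarrow> bilinear_op sc m \<and>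
     (\<forall>x y z. m x (m y z) = m (m x y) z + m y (m x z))"

definition two_cocycle :: "('v::ab_group_add \<Rightarrow> 'v \<Rightarrow> 'v) \<Rightarrow> ('v \<Rightarrow> 'v \<Rightarrow> 'k::field) \<Rightarrow> bool" where
  "two_cocycle m w \<longleftrightarrow> (\<forall>x y z. w z (m x y) = w x (m y z + m z y) - w y (m x z))"

end

theory Submission
  imports Defs
begin

text \<open>Since \<open>(a \<star> b) \<star> c = a \<star> (b \<star> c)\<close> and \<open>a \<star> (b \<star> c) = b \<star> (a \<star> c)\<close>, every triple product in a
  perm algebra is symmetric in its first two factors. Expanding the Leibniz identity for
  \<open>x \<circ> y = P x \<star> y - x \<star> P y\<close> with this symmetry, everything cancels except the terms
  containing \<open>P (x \<circ> y)\<close>; these vanish for an averaging operator (where \<open>P (x \<circ> y) = 0\<close>) and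
  cancel again by the symmetry for a derivation (where \<open>P (x \<circ> y) = P\<^sup>2 x \<star> y - x \<star> P\<^sup>2 y\<close>).
  The cocycle identity needs no property of \<open>P\<close> at all: invariance and skew-symmetry of \<open>\<omega>\<close>
  allow every term \<open>\<omega> c (a \<star> b)\<close> to be moved into the form \<open>\<omega> x (\<dots>)\<close> or \<open>\<omega> y (\<dots>)\<close>.\<close>

definition derived_product :: "('v \<Rightarrow> 'v \<Rightarrow> 'v) \<Rightarrow> ('v \<Rightarrow> 'v) \<Rightarrow> 'v \<Rightarrow> 'v \<Rightarrow> 'v::ab_group_add"
  where "derived_product m P x y = m (P x) y - m x (P y)"

lemma linear_additive:
  assumes "Vector_Spaces.linear s1 s2 f"
  shows "f (x + y) = f x + f y" "f (x - y) = f x - f y"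
  using assms by (simp_all add: linear_iff_module_hom module_hom.add module_hom.diff)

lemma bilinear_op_diff:
  assumes "bilinear_op sc m"
  shows "m x (y - z) = m x y - m x z" "m (x - y) z = m x z - m y z"
  using assms linear_additive(2) unfolding bilinear_op_def by blast+

lemma bilinear_op_zero:
  assumes "bilinear_op sc m"
  shows "m x 0 = 0" "m 0 x = 0"
  using bilinear_op_diff[OF assms, of x 0 0] bilinear_op_diff[OF assms, of 0 0 x] by simp_all

lemma perm_algebra_assoc:
  "perm_algebra sc m \<Longrightarrow> m (m x y) z = m x (m y z)"
  unfolding perm_algebra_def by simp

lemma perm_algebra_left_commute:
  "perm_algebra sc m \<Longrightarrow> m x (m y z) = m y (m x z)"
  unfolding perm_algebra_def by metis

lemma bilinear_op_derived_product:
  assumes m: "bilinear_op sc m" and P: "Vector_Spaces.linear sc sc P"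
  shows "bilinear_op sc (derived_product m P)"
proof -
  interpret vector_space_pair sc sc
    using P by (simp add: linear_iff vector_space_pair_def)
  have left: "Vector_Spaces.linear sc sc (m x)" and right: "Vector_Spaces.linear sc sc (\<lambda>x. m x y)"
    for x y using m unfolding bilinear_op_def by auto
  have "Vector_Spaces.linear sc sc (\<lambda>y. m (P x) y - m x (P y))" for x
    using linear_compose_sub[OF left Vector_Spaces.linear_compose[OF P left]] by (simp add: o_def)
  moreover have "Vector_Spaces.linear sc sc (\<lambda>x. m (P x) y - m x (P y))" for y
    using linear_compose_sub[OF Vector_Spaces.linear_compose[OF P right] right] by (simp add: o_def)
  ultimately show ?thesis
    unfolding bilinear_op_def derived_product_def by simp
qed

lemma leibniz_identity_derived_productI:
  assumes m: "perm_algebra sc m" and P: "Vector_Spaces.linear sc sc P"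
    and defect: "\<And>x y z. m (P (derived_product m P x y)) z + m x (P (derived_product m P y z))
                       = m y (P (derived_product m P x z))"
  shows "derived_product m P x (derived_product m P y z)
       = derived_product m P (derived_product m P x y) z + derived_product m P y (derived_product m P x z)"
proof -
  have bil: "bilinear_op sc m"
    using m unfolding perm_algebra_def by simp
  have "derived_product m P x (derived_product m P y z)
      - derived_product m P (derived_product m P x y) z - derived_product m P y (derived_product m P x z)
      = m y (P (derived_product m P x z))
        - (m (P (derived_product m P x y)) z + m x (P (derived_product m P y z)))"
    unfolding derived_product_def
    by (simp add: bilinear_op_diff[OF bil] linear_additive[OF P] perm_algebra_assoc[OF m]
        perm_algebra_left_commute[OF m, of "P x" "P y"] perm_algebra_left_commute[OF m, of x "P y"])
  also have "\<dots> = 0"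
    by (simp add: defect)
  finally show ?thesis
    by (simp add: algebra_simps)
qed

lemma averaging_operator_derived_product_kernel:
  assumes "averaging_operator sc m P"
  shows "P (derived_product m P x y) = 0"
proof -
  have "Vector_Spaces.linear sc sc P" "P (m (P x) y) = P (m x (P y))"
    using assms unfolding averaging_operator_def by simp_all
  then show ?thesis
    unfolding derived_product_def by (simp add: linear_additive)
qed

lemma derivation_derived_product:
  assumes "derivation sc m P"
  shows "P (derived_product m P x y) = m (P (P x)) y - m x (P (P y))"
proof -
  have "Vector_Spaces.linear sc sc P" "\<And>a b. P (m a b) = m (P a) b + m a (P b)"
    using assms unfolding derivation_def by simp_all
  then show ?thesis
    unfolding derived_product_def by (simp add: linear_additive)
qed

lemma leibniz_algebra_derived_product:
  assumes m: "perm_algebra sc m" and P: "averaging_operator sc m P \<or> derivation sc m P"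
  shows "leibniz_algebra sc (derived_product m P)"
proof -
  have lin: "Vector_Spaces.linear sc sc P"
    using P unfolding averaging_operator_def derivation_def by blast
  have bil: "bilinear_op sc m"
    using m unfolding perm_algebra_def by simp
  have "m (P (derived_product m P x y)) z + m x (P (derived_product m P y z))
      = m y (P (derived_product m P x z))" for x y z
    using P
  proof
    assume "averaging_operator sc m P"
    then show ?thesis
      by (simp add: averaging_operator_derived_product_kernel bilinear_op_zero[OF bil])
  next
    assume "derivation sc m P"
    then show ?thesis
      by (simp add: derivation_derived_product bilinear_op_diff[OF bil] perm_algebra_assoc[OF m]
          perm_algebra_left_commute[OF m, of y "P (P x)"] perm_algebra_left_commute[OF m, of y x])
  qed
  with m lin bil show ?thesis
    unfolding leibniz_algebra_def
    using bilinear_op_derived_product leibniz_identity_derived_productI by blast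
qed

lemma quadratic_perm_algebra_move_left:
  assumes "quadratic_perm_algebra sc m w"
  shows "w z (m x y) = w x (m z y - m y z)"
proof -
  have "w z (m x y) = - w (m x y) z"
    using assms unfolding quadratic_perm_algebra_def skew_symmetric_def by blast
  also have "\<dots> = - w x (m y z - m z y)"
    using assms unfolding quadratic_perm_algebra_def by simp
  also have "\<dots> = w x (m z y - m y z)"
  proof -
    have "Vector_Spaces.linear sc (*) (w x)"
      using assms unfolding quadratic_perm_algebra_def bilinear_form_def by simp
    then show ?thesis
      by (metis linear_additive(2) minus_diff_eq)
  qed
  finally show ?thesis .
qed

lemma quadratic_perm_algebra_swap:
  assumes "quadratic_perm_algebra sc m w"
  shows "w z (m x y) = - w y (m x z)"
proof -
  have "Vector_Spaces.linear sc (*) (w x)"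
    using assms unfolding quadratic_perm_algebra_def bilinear_form_def by simp
  then show ?thesis
    unfolding quadratic_perm_algebra_move_left[OF assms, of z x y]
      quadratic_perm_algebra_move_left[OF assms, of y x z]
    by (metis linear_additive(2) minus_diff_eq)
qed

lemma quadratic_perm_algebra_two_cocycle_derived_product:
  assumes q: "quadratic_perm_algebra sc m w"
  shows "two_cocycle (derived_product m P) w"
  unfolding two_cocycle_def
proof (intro allI)
  fix x y z
  have w: "w a (b + c) = w a b + w a c" "w a (b - c) = w a b - w a c" for a b c
    using q linear_additive unfolding quadratic_perm_algebra_def bilinear_form_def by blast+
  show "w z (derived_product m P x y)
      = w x (derived_product m P y z + derived_product m P z y) - w y (derived_product m P x z)"
    unfolding derived_product_def
    by (simp add: w quadratic_perm_algebra_swap[OF q, of z "P x" y]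
        quadratic_perm_algebra_move_left[OF q, of z x "P y"]
        quadratic_perm_algebra_move_left[OF q, of y x "P z"])
qed

theorem proposition2p13:
  fixes sc :: "'k::field_char_0 \<Rightarrow> 'v::ab_group_add \<Rightarrow> 'v"
    and mult :: "'v \<Rightarrow> 'v \<Rightarrow> 'v"
    and \<omega> :: "'v \<Rightarrow> 'v \<Rightarrow> 'k"
    and P :: "'v \<Rightarrow> 'v"
  assumes "vector_space sc"
    and "fin_dim_vs sc"
    and "quadratic_perm_algebra sc mult \<omega>"
    and "averaging_operator sc mult P \<or> derivation sc mult P"
  shows "leibniz_algebra sc (\<lambda>x y. mult (P x) y - mult x (P y))
     \<and> bilinear_form sc \<omega> \<and> nondegenerate \<omega> \<and> skew_symmetric \<omega>
     \<and> two_cocycle (\<lambda>x y. mult (P x) y - mult x (P y)) \<omega>"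
proof -
  have "(\<lambda>x y. mult (P x) y - mult x (P y)) = derived_product mult P"
    by (simp add: fun_eq_iff derived_product_def)
  moreover have "leibniz_algebra sc (derived_product mult P)"
    using assms(3,4) leibniz_algebra_derived_product quadratic_perm_algebra_def by blast
  moreover have "two_cocycle (derived_product mult P) \<omega>"
    using assms(3) by (rule quadratic_perm_algebra_two_cocycle_derived_product)
  ultimately show ?thesis
    using assms(3) unfolding quadratic_perm_algebra_def by simp
qed

end
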